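(* Let $F:\mathbb C^n\to\mathbb C^n$ be a square system of polynomials with real coefficients and let $I=(I_1,\dots,I_n)\in\mathbb{IC}^n$ be a strong interval approximate zero of $F$ for which there exist $x\in I$ and an invertible $Y\in\mathbb C^{n\times n}$ with $K_{x,Y}(I)\subset I$, $\sqrt2\,\lVert\mathbf 1_n-Y\cdot\square\mathrm JF(I)\rVert_\infty<1$ and $\{\bar z: z\in K_{x,Y}(I)\}\subset I$. If $\mathrm{Re}(I)>0$ (i.e., the real-part interval of every coordinate $I_k$ consists of positive numbers), then the unique zero of $F$ in $I$ is real and has all coordinates positive.
   Context: $\mathbb{IR}$ is the set of compact real intervals $[a,b]$, with operations $X\circ Y=\{x\circ y: x\in X,y\in Y\}$ for $\circ\in\{+,-,\cdot,/\}$ ($0\notin Y$ for division). $\mathbb{IC}=\{X+iY: X,Y\in\mathbb{IR}\}$ is the set of rectangular complex intervals, where $X+iY=\{x+iy:x\in X,y\in Y\}$ (so $\mathrm{Re}(X+iY)=X$), with operations defined for $I=X+iY$, $J=W+iZ$ by $I\pm J=(X\pm W)+i(Y\pm Z)$, $I\cdot J=(X W-YZ)+i(XZ+YW)$, $I/J=\frac{XW+YZ}{WW+ZZ}+i\frac{YW-XZ}{WW+ZZ}$. Operations on $\mathbb{IC}^n$ are componentwise; for an interval matrix $A=(A_{i,j})\in\mathbb{IC}^{n\times n}$ and $I\in\mathbb{IC}^n$, $A\cdot I:=\sum_{j=1}^n I_j\cdot(A_{1,j},\dots,A_{n,j})^T$. A point $x\in\mathbb C^n$ is identified with the degenerate interval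 vector $[\mathrm{Re}\,x,\mathrm{Re}\,x]+i[\mathrm{Im}\,x,\mathrm{Im}\,x]$. An interval enclosure of $F:\mathbb C^n\to\mathbb C^m$ is a map $\square F:\mathbb{IC}^n\to\mathbb{IC}^m$ with $\{F(x):x\in I\}\subseteq\square F(I)$ for all $I$; $\square F$ and $\square\mathrm JF$ denote fixed interval enclosures of $F$ and its Jacobian $\mathrm JF$. For $A\in\mathbb{IC}^{n\times n}$, $\lVert A\rVert_\infty:=\max_{B\in A}\max_{v\ne0}\lVert Bv\rVert_\infty/\lVert v\rVert_\infty$. The Krawczyk operator is $K_{x,Y}(I):=x-Y\cdot\square F(x)+(\mathbf 1_n-Y\cdot\square\mathrm JF(I))(I-x)$. $I$ is a strong interval approximate zero of $F$ if there exist $x\in I$ and invertible $Y$ with $K_{x,Y}(I)\subset I$ and $\sqrt2\,\lVert\mathbf 1_n-Y\cdot\square\mathrm JF(I)\rVert_\infty<1$; such an $I$ contains exactly one zero of $F$. *)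

theory Defs
  imports "HOL-Analysis.Analysis"
begin

type_synonym ir = "real set"

definition is_ir :: "real set \<Rightarrow> bool" where
  "is_ir X \<longleftrightarrow> (\<exists>a b. a \<le> b \<and> X = {a..b})"

definition ir_add :: "ir \<Rightarrow> ir \<Rightarrow> ir" where
  "ir_add X Y = {x + y | x y. x \<in> X \<and> y \<in> Y}"

definition ir_sub :: "ir \<Rightarrow> ir \<Rightarrow> ir" where
  "ir_sub X Y = {x - y | x y. x \<in> X \<and> y \<in> Y}"

definition ir_mul :: "ir \<Rightarrow> ir \<Rightarrow> ir" where
  "ir_mul X Y = {x * y | x y. x \<in> X \<and> y \<in> Y}"

definition ir_sum :: "('j \<Rightarrow> ir) \<Rightarrow> 'j set \<Rightarrow> ir" where
  "ir_sum X J = {(\<Sum>j\<in>J. x j) | x. \<forall>j\<in>J. x j \<in> X j}"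

type_synonym ic = "ir \<times> ir"

definition is_ic :: "ic \<Rightarrow> bool" where
  "is_ic I \<longleftrightarrow> is_ir (fst I) \<and> is_ir (snd I)"

definition ic_set :: "ic \<Rightarrow> complex set" where
  "ic_set I = {Complex x y | x y. x \<in> fst I \<and> y \<in> snd I}"

definition ic_pt :: "complex \<Rightarrow> ic" where
  "ic_pt z = ({Re z}, {Im z})"

definition ic_add :: "ic \<Rightarrow> ic \<Rightarrow> ic" where
  "ic_add I J = (ir_add (fst I) (fst J), ir_add (snd I) (snd J))"

definition ic_sub :: "ic \<Rightarrow> ic \<Rightarrow> ic" where
  "ic_sub I J = (ir_sub (fst I) (fst J), ir_sub (snd I) (snd J))"

definition ic_mul :: "ic \<Rightarrow> ic \<Rightarrow> ic" where
  "ic_mul I J = (ir_sub (ir_mul (fst I) (fst J)) (ir_mul (snd I) (snd J)),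
                 ir_add (ir_mul (fst I) (snd J)) (ir_mul (snd I) (fst J)))"

definition ic_sum :: "('j \<Rightarrow> ic) \<Rightarrow> 'j set \<Rightarrow> ic" where
  "ic_sum f J = (ir_sum (\<lambda>j. fst (f j)) J, ir_sum (\<lambda>j. snd (f j)) J)"

section \<open>Interval vectors ('n \<Rightarrow> ic) and interval matrices ('n \<Rightarrow> 'n \<Rightarrow> ic, row, column)\<close>

definition icvec_ok :: "('n \<Rightarrow> ic) \<Rightarrow> bool" where
  "icvec_ok I \<longleftrightarrow> (\<forall>k. is_ic (I k))"

definition icmat_ok :: "('n \<Rightarrow> 'm \<Rightarrow> ic) \<Rightarrow> bool" where
  "icmat_ok A \<longleftrightarrow> (\<forall>i j. is_ic (A i j))"

definition ibox :: "('n::finite \<Rightarrow> ic) \<Rightarrow> (complex^'n) set" where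
  "ibox I = {z. \<forall>k. z $ k \<in> ic_set (I k)}"

definition imat_members :: "('n::finite \<Rightarrow> 'n \<Rightarrow> ic) \<Rightarrow> (complex^'n^'n) set" where
  "imat_members A = {B. \<forall>i j. B $ i $ j \<in> ic_set (A i j)}"

definition pt_vec :: "complex^'n \<Rightarrow> ('n::finite \<Rightarrow> ic)" where
  "pt_vec x = (\<lambda>k. ic_pt (x $ k))"

definition pt_mat :: "complex^'n^'n \<Rightarrow> ('n::finite \<Rightarrow> 'n \<Rightarrow> ic)" where
  "pt_mat Y = (\<lambda>i j. ic_pt (Y $ i $ j))"

definition vec_add :: "('n \<Rightarrow> ic) \<Rightarrow> ('n \<Rightarrow> ic) \<Rightarrow> ('n \<Rightarrow> ic)" where
  "vec_add I J = (\<lambda>k. ic_add (I k) (J k))"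

definition vec_sub :: "('n \<Rightarrow> ic) \<Rightarrow> ('n \<Rightarrow> ic) \<Rightarrow> ('n \<Rightarrow> ic)" where
  "vec_sub I J = (\<lambda>k. ic_sub (I k) (J k))"

definition mat_sub :: "('n \<Rightarrow> 'n \<Rightarrow> ic) \<Rightarrow> ('n \<Rightarrow> 'n \<Rightarrow> ic) \<Rightarrow> ('n \<Rightarrow> 'n \<Rightarrow> ic)" where
  "mat_sub A B = (\<lambda>i j. ic_sub (A i j) (B i j))"

definition mat_vec :: "('n::finite \<Rightarrow> 'n \<Rightarrow> ic) \<Rightarrow> ('n \<Rightarrow> ic) \<Rightarrow> ('n \<Rightarrow> ic)" where
  "mat_vec A I = (\<lambda>i. ic_sum (\<lambda>j. ic_mul (I j) (A i j)) UNIV)"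

definition mat_mat :: "('n::finite \<Rightarrow> 'n \<Rightarrow> ic) \<Rightarrow> ('n \<Rightarrow> 'n \<Rightarrow> ic) \<Rightarrow> ('n \<Rightarrow> 'n \<Rightarrow> ic)" where
  "mat_mat A B = (\<lambda>i k. mat_vec A (\<lambda>j. B j k) i)"

definition real_poly_system :: "(complex^'n \<Rightarrow> complex^'n) \<Rightarrow> bool" where
  "real_poly_system F \<longleftrightarrow>
     (\<forall>i. \<exists>(A :: ('n \<Rightarrow> nat) set) (c :: ('n \<Rightarrow> nat) \<Rightarrow> real). finite A \<and>
        (\<forall>z. F z $ i = (\<Sum>\<alpha>\<in>A. of_real (c \<alpha>) * (\<Prod>k\<in>UNIV. (z $ k) ^ (\<alpha> k)))))"

definition jac :: "(complex^'n \<Rightarrow> complex^'n) \<Rightarrow> complex^'n \<Rightarrow> complex^'n^'n" where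
  "jac F z = (\<chi> i j. deriv (\<lambda>t. F (\<chi> k. if k = j then t else z $ k) $ i) (z $ j))"

definition is_enclosure_F :: "(complex^'n \<Rightarrow> complex^'n) \<Rightarrow> (('n \<Rightarrow> ic) \<Rightarrow> ('n \<Rightarrow> ic)) \<Rightarrow> bool" where
  "is_enclosure_F F FI \<longleftrightarrow>
     (\<forall>I. icvec_ok I \<longrightarrow> icvec_ok (FI I) \<and> F ` ibox I \<subseteq> ibox (FI I))"

definition is_enclosure_JF :: "(complex^'n \<Rightarrow> complex^'n) \<Rightarrow> (('n \<Rightarrow> ic) \<Rightarrow> ('n \<Rightarrow> 'n \<Rightarrow> ic)) \<Rightarrow> bool" where
  "is_enclosure_JF F JI \<longleftrightarrow>
     (\<forall>I. icvec_ok I \<longrightarrow> icmat_ok (JI I) \<and> jac F ` ibox I \<subseteq> imat_members (JI I))"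

definition vnorm_inf :: "complex^'n::finite \<Rightarrow> real" where
  "vnorm_inf v = Max (range (\<lambda>k. cmod (v $ k)))"

definition imat_norm :: "('n::finite \<Rightarrow> 'n \<Rightarrow> ic) \<Rightarrow> real" where
  "imat_norm A = Sup {vnorm_inf (B *v v) / vnorm_inf v | B v. B \<in> imat_members A \<and> v \<noteq> 0}"

definition kmat :: "(('n::finite \<Rightarrow> ic) \<Rightarrow> ('n \<Rightarrow> 'n \<Rightarrow> ic)) \<Rightarrow> complex^'n^'n \<Rightarrow> ('n \<Rightarrow> ic) \<Rightarrow> ('n \<Rightarrow> 'n \<Rightarrow> ic)" where
  "kmat JI Y I = mat_sub (pt_mat (mat 1)) (mat_mat (pt_mat Y) (JI I))"

definition krawczyk :: "(('n::finite \<Rightarrow> ic) \<Rightarrow> ('n \<Rightarrow> ic)) \<Rightarrow> (('n \<Rightarrow> ic) \<Rightarrow> ('n \<Rightarrow> 'n \<Rightarrow> ic))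
    \<Rightarrow> complex^'n \<Rightarrow> complex^'n^'n \<Rightarrow> ('n \<Rightarrow> ic) \<Rightarrow> ('n \<Rightarrow> ic)" where
  "krawczyk FI JI x Y I =
     vec_add (vec_sub (pt_vec x) (mat_vec (pt_mat Y) (FI (pt_vec x))))
             (mat_vec (kmat JI Y I) (vec_sub I (pt_vec x)))"

definition strong_iaz :: "(('n::finite \<Rightarrow> ic) \<Rightarrow> ('n \<Rightarrow> ic)) \<Rightarrow> (('n \<Rightarrow> ic) \<Rightarrow> ('n \<Rightarrow> 'n \<Rightarrow> ic))
    \<Rightarrow> ('n \<Rightarrow> ic) \<Rightarrow> bool" where
  "strong_iaz FI JI I \<longleftrightarrow>
     (\<exists>x Y. x \<in> ibox I \<and> invertible Y \<and> ibox (krawczyk FI JI x Y I) \<subseteq> ibox I \<and>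
            sqrt 2 * imat_norm (kmat JI Y I) < 1)"

definition vcnj :: "complex^'n \<Rightarrow> complex^'n" where
  "vcnj z = (\<chi> k. cnj (z $ k))"

end

theory Submission
  imports Defs
begin

(* The map g z = z - Y *v F z sends the box I into the Krawczyk box K = K_{x,Y}(I), which lies
   in I: applying the mean value theorem to the real and imaginary parts of F separately gives
   g z = (x - Y F x) + (1 - Y M) (z - x) with M in the Jacobian enclosure (one matrix for the
   real part, one for the imaginary part), and interval arithmetic is inclusion monotone.
   Brouwer's theorem yields a fixed point z of g, a zero of F as Y is invertible. If F z = F w on
   I, the same expansion shows that d = z - w is fixed by a real-linear map built from members of
   1 - Y JF(I); measured by max_k max |Re d_k| |Im d_k| it contracts by the factor
   sqrt 2 * norm (1 - Y JF(I)) < 1, so d = 0. Since F has real coefficients, conj z is a zero of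
   F as well, and conj z lies in I because z = g z is in K and conj K is contained in I. Hence
   conj z = z: the zero is real, and positive because Re I > 0. *)

lemma mem_ic_set_iff: "z \<in> ic_set A \<longleftrightarrow> Re z \<in> fst A \<and> Im z \<in> snd A"
  unfolding ic_set_def by (cases z) auto

lemma mem_ibox_iff: "z \<in> ibox I \<longleftrightarrow> (\<forall>k. Re (z $ k) \<in> fst (I k) \<and> Im (z $ k) \<in> snd (I k))"
  unfolding ibox_def mem_ic_set_iff by simp

lemma mem_imat_members_iff:
  "B \<in> imat_members A \<longleftrightarrow> (\<forall>i j. Re (B $ i $ j) \<in> fst (A i j) \<and> Im (B $ i $ j) \<in> snd (A i j))"
  unfolding imat_members_def mem_ic_set_iff by simp

lemma ic_set_Complex_mix: "u \<in> ic_set A \<Longrightarrow> v \<in> ic_set A \<Longrightarrow> Complex (Re u) (Im v) \<in> ic_set A"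
  by (simp add: mem_ic_set_iff)

text \<open>The mean
  value theorem applies to the real and the imaginary part of \<open>F\<close> separately, so a
  difference \<open>F z - F p\<close> has this form with two matrices from the Jacobian enclosure in
  place of a single Jacobian matrix.\<close>
definition mixed_mult :: "complex^'n::finite^'m \<Rightarrow> complex^'n^'m \<Rightarrow> complex^'n \<Rightarrow> complex^'m" where
  "mixed_mult B\<^sub>1 B\<^sub>2 d =
     (\<chi> i. \<Sum>k\<in>UNIV. of_real (Re (d $ k)) * B\<^sub>1 $ i $ k + \<i> * of_real (Im (d $ k)) * B\<^sub>2 $ i $ k)"

lemma mixed_mult_same: "mixed_mult B B d = B *v d"
proof -
  have "of_real (Re c) * b + \<i> * of_real (Im c) * b = b * c" for b c :: complex
    by (simp add: complex_eq_iff algebra_simps)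
  then show ?thesis by (simp add: mixed_mult_def matrix_vector_mult_def)
qed

lemma Re_mixed_mult:
  "Re (mixed_mult B\<^sub>1 B\<^sub>2 d $ i) = (\<Sum>k\<in>UNIV. Re (B\<^sub>1 $ i $ k) * Re (d $ k) - Im (B\<^sub>2 $ i $ k) * Im (d $ k))"
  by (simp add: mixed_mult_def Re_sum algebra_simps)

lemma Im_mixed_mult:
  "Im (mixed_mult B\<^sub>1 B\<^sub>2 d $ i) = (\<Sum>k\<in>UNIV. Im (B\<^sub>1 $ i $ k) * Re (d $ k) + Re (B\<^sub>2 $ i $ k) * Im (d $ k))"
  by (simp add: mixed_mult_def Im_sum algebra_simps)

lemma mixed_mult_diff:
  "mixed_mult (A\<^sub>1 - C\<^sub>1) (A\<^sub>2 - C\<^sub>2) d = mixed_mult A\<^sub>1 A\<^sub>2 d - mixed_mult C\<^sub>1 C\<^sub>2 d"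
  by (simp add: mixed_mult_def vec_eq_iff algebra_simps sum_subtractf)

lemma mixed_mult_matrix_mult: "mixed_mult (Y ** B\<^sub>1) (Y ** B\<^sub>2) d = Y *v mixed_mult B\<^sub>1 B\<^sub>2 d"
proof (rule vec_eq_iff[THEN iffD2], rule allI)
  fix i
  let ?t = "\<lambda>j k. Y $ i $ j * (of_real (Re (d $ k)) * B\<^sub>1 $ j $ k + \<i> * of_real (Im (d $ k)) * B\<^sub>2 $ j $ k)"
  have "mixed_mult (Y ** B\<^sub>1) (Y ** B\<^sub>2) d $ i = (\<Sum>k\<in>UNIV. \<Sum>j\<in>UNIV. ?t j k)"
    by (simp add: mixed_mult_def matrix_matrix_mult_def sum_distrib_left sum.distrib algebra_simps)
  also have "\<dots> = (\<Sum>j\<in>UNIV. \<Sum>k\<in>UNIV. ?t j k)"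
    by (rule sum.swap)
  also have "\<dots> = (Y *v mixed_mult B\<^sub>1 B\<^sub>2 d) $ i"
    by (simp add: mixed_mult_def matrix_vector_mult_def sum_distrib_left)
  finally show "mixed_mult (Y ** B\<^sub>1) (Y ** B\<^sub>2) d $ i = (Y *v mixed_mult B\<^sub>1 B\<^sub>2 d) $ i" .
qed

lemma mixed_mult_id_minus:
  "mixed_mult (mat 1 - Y ** B\<^sub>1) (mat 1 - Y ** B\<^sub>2) d = d - Y *v mixed_mult B\<^sub>1 B\<^sub>2 d"
  by (simp add: mixed_mult_diff mixed_mult_same mixed_mult_matrix_mult)

subsection \<open>Inclusion properties of interval arithmetic\<close>

lemma ir_addI: "a \<in> X \<Longrightarrow> b \<in> Y \<Longrightarrow> a + b \<in> ir_add X Y"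
  unfolding ir_add_def by blast

lemma ir_subI: "a \<in> X \<Longrightarrow> b \<in> Y \<Longrightarrow> a - b \<in> ir_sub X Y"
  unfolding ir_sub_def by blast

lemma ir_mulI: "a \<in> X \<Longrightarrow> b \<in> Y \<Longrightarrow> a * b \<in> ir_mul X Y"
  unfolding ir_mul_def by blast

lemma ir_sumI: "(\<And>j. j \<in> J \<Longrightarrow> x j \<in> X j) \<Longrightarrow> (\<Sum>j\<in>J. x j) \<in> ir_sum X J"
  unfolding ir_sum_def by blast

lemma ic_ptI: "z \<in> ic_set (ic_pt z)"
  unfolding mem_ic_set_iff ic_pt_def by simp

lemma ic_addI: "a \<in> ic_set A \<Longrightarrow> b \<in> ic_set B \<Longrightarrow> a + b \<in> ic_set (ic_add A B)"
  unfolding mem_ic_set_iff ic_add_def by (auto intro: ir_addI)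

lemma ic_subI: "a \<in> ic_set A \<Longrightarrow> b \<in> ic_set B \<Longrightarrow> a - b \<in> ic_set (ic_sub A B)"
  unfolding mem_ic_set_iff ic_sub_def by (auto intro: ir_subI)

lemma ic_sumI: "(\<And>j. j \<in> J \<Longrightarrow> x j \<in> ic_set (X j)) \<Longrightarrow> (\<Sum>j\<in>J. x j) \<in> ic_set (ic_sum X J)"
  unfolding mem_ic_set_iff ic_sum_def by (auto simp: Re_sum Im_sum intro!: ir_sumI)

text \<open>The real and the imaginary part of a rectangular product are computed independently.\<close>
lemma ic_mul_mixedI:
  assumes "u \<in> ic_set U" "b\<^sub>1 \<in> ic_set A" "b\<^sub>2 \<in> ic_set A"
  shows "of_real (Re u) * b\<^sub>1 + \<i> * of_real (Im u) * b\<^sub>2 \<in> ic_set (ic_mul U A)"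
  using assms unfolding mem_ic_set_iff ic_mul_def by (auto intro!: ir_subI ir_addI ir_mulI)

lemma ic_mulI:
  assumes "u \<in> ic_set U" "b \<in> ic_set A"
  shows "u * b \<in> ic_set (ic_mul U A)"
proof -
  have "u * b = of_real (Re u) * b + \<i> * of_real (Im u) * b"
    by (simp add: complex_eq_iff algebra_simps)
  then show ?thesis using ic_mul_mixedI[OF assms assms(2)] by simp
qed

lemma ibox_pt_vec: "x \<in> ibox (pt_vec x)"
  unfolding ibox_def pt_vec_def by (simp add: ic_ptI)

lemma is_ir_singleton: "is_ir {r}"
  unfolding is_ir_def by (intro exI[of _ r]) simp

lemma icvec_ok_pt_vec: "icvec_ok (pt_vec x)"
  unfolding icvec_ok_def is_ic_def pt_vec_def ic_pt_def by (simp add: is_ir_singleton)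

lemma imat_members_pt_mat: "Y \<in> imat_members (pt_mat Y)"
  unfolding imat_members_def pt_mat_def by (simp add: ic_ptI)

lemma ibox_vec_addI: "u \<in> ibox I \<Longrightarrow> v \<in> ibox J \<Longrightarrow> u + v \<in> ibox (vec_add I J)"
  unfolding ibox_def vec_add_def by (simp add: ic_addI)

lemma ibox_vec_subI: "u \<in> ibox I \<Longrightarrow> v \<in> ibox J \<Longrightarrow> u - v \<in> ibox (vec_sub I J)"
  unfolding ibox_def vec_sub_def by (simp add: ic_subI)

lemma imat_members_mat_subI:
  "B \<in> imat_members A \<Longrightarrow> C \<in> imat_members D \<Longrightarrow> B - C \<in> imat_members (mat_sub A D)"
  unfolding imat_members_def mat_sub_def by (simp add: ic_subI)

lemma ibox_mixed_mult_mat_vecI: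
  assumes "B\<^sub>1 \<in> imat_members A" "B\<^sub>2 \<in> imat_members A" "d \<in> ibox J"
  shows "mixed_mult B\<^sub>1 B\<^sub>2 d \<in> ibox (mat_vec A J)"
  using assms unfolding ibox_def imat_members_def mat_vec_def mixed_mult_def
  by (auto intro!: ic_sumI ic_mul_mixedI)

lemma ibox_mat_vecI: "B \<in> imat_members A \<Longrightarrow> d \<in> ibox J \<Longrightarrow> B *v d \<in> ibox (mat_vec A J)"
  using ibox_mixed_mult_mat_vecI[of B A B d J] by (simp add: mixed_mult_same)

lemma imat_members_mat_matI:
  assumes "B \<in> imat_members A" "C \<in> imat_members D"
  shows "B ** C \<in> imat_members (mat_mat A D)"
proof -
  have "(B ** C) $ i $ k = (\<Sum>j\<in>UNIV. C $ j $ k * B $ i $ j)" for i k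
    by (simp add: matrix_matrix_mult_def mult.commute)
  then show ?thesis
    using assms unfolding imat_members_def mat_mat_def mat_vec_def by (auto intro!: ic_sumI ic_mulI)
qed

lemma imat_members_kmatI:
  "M \<in> imat_members (JI I) \<Longrightarrow> mat 1 - Y ** M \<in> imat_members (kmat JI Y I)"
  unfolding kmat_def
  by (intro imat_members_mat_subI imat_members_mat_matI imat_members_pt_mat)

subsection \<open>Compactness and convexity of boxes\<close>

lemma ic_set_eq_box:
  assumes "is_ic A"
  obtains a b c e where "ic_set A = {z. a \<le> Re z \<and> Re z \<le> b \<and> c \<le> Im z \<and> Im z \<le> e}"
proof -
  obtain a b c e where "fst A = {a..b}" "snd A = {c..e}"
    using assms unfolding is_ic_def is_ir_def by blast
  then show ?thesis
    by (intro that[of a b c e]) (auto simp: mem_ic_set_iff)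
qed

lemma compact_ic_set:
  assumes "is_ic A"
  shows "compact (ic_set A)"
proof -
  obtain a b c e where A: "ic_set A = {z. a \<le> Re z \<and> Re z \<le> b \<and> c \<le> Im z \<and> Im z \<le> e}"
    using ic_set_eq_box[OF assms] .
  have "closed (ic_set A)"
    unfolding A by (intro closed_Collect_conj closed_Collect_le continuous_intros)
  moreover have "cmod z \<le> \<bar>a\<bar> + \<bar>b\<bar> + \<bar>c\<bar> + \<bar>e\<bar>" if "z \<in> ic_set A" for z
    using that cmod_le[of z] unfolding A by auto
  then have "bounded (ic_set A)"
    unfolding bounded_iff by blast
  ultimately show ?thesis
    by (simp add: compact_eq_bounded_closed)
qed

lemma convex_ic_set:
  assumes "is_ic A"
  shows "convex (ic_set A)"
proof -
  obtain a b c e where A: "ic_set A = {z. a \<le> Re z \<and> Re z \<le> b \<and> c \<le> Im z \<and> Im z \<le> e}"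
    using ic_set_eq_box[OF assms] .
  have "ic_set A = Re -` {a..b} \<inter> Im -` {c..e}"
    unfolding A by auto
  then show ?thesis
    by (simp add: convex_Int convex_linear_vimage bounded_linear.linear[OF bounded_linear_Re]
        bounded_linear.linear[OF bounded_linear_Im])
qed

lemma ibox_eq_INT: "ibox I = (\<Inter>k. (\<lambda>z. z $ k) -` ic_set (I k))"
  unfolding ibox_def by auto

lemma convex_ibox: "icvec_ok I \<Longrightarrow> convex (ibox I)"
  unfolding ibox_eq_INT icvec_ok_def
  by (intro convex_INT convex_linear_vimage convex_ic_set bounded_linear.linear[OF bounded_linear_vec_nth])
    auto

lemma compact_ibox:
  assumes "icvec_ok I"
  shows "compact (ibox I)"
proof -
  have cpt: "compact (ic_set (I k))" for k
    using assms unfolding icvec_ok_def by (simp add: compact_ic_set)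
  have "\<forall>k. \<exists>M. \<forall>w\<in>ic_set (I k). cmod w \<le> M"
    using compact_imp_bounded[OF cpt] unfolding bounded_iff by blast
  then obtain M where M: "\<And>k w. w \<in> ic_set (I k) \<Longrightarrow> cmod w \<le> M k"
    by metis
  have "norm z \<le> (\<Sum>k\<in>UNIV. M k)" if "z \<in> ibox I" for z
  proof -
    have "norm z \<le> (\<Sum>k\<in>UNIV. cmod (z $ k))"
      unfolding norm_vec_def by (rule L2_set_le_sum) simp
    also have "\<dots> \<le> (\<Sum>k\<in>UNIV. M k)"
      using that M unfolding ibox_def by (auto intro: sum_mono)
    finally show ?thesis .
  qed
  then have "bounded (ibox I)"
    unfolding bounded_iff by blast
  moreover have "closed (ibox I)"
    unfolding ibox_def by (intro closed_vector_box allI compact_imp_closed cpt)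
  ultimately show ?thesis
    by (simp add: compact_eq_bounded_closed)
qed

subsection \<open>Complex gradients and the mean value theorem\<close>

definition has_complex_gradient :: "(complex^'n::finite \<Rightarrow> complex) \<Rightarrow> complex^'n \<Rightarrow> complex^'n \<Rightarrow> bool" where
  "has_complex_gradient f g q \<longleftrightarrow>
     (\<forall>d. ((\<lambda>t. f (q + t *s d)) has_field_derivative (\<Sum>k\<in>UNIV. g $ k * d $ k)) (at 0))"

lemma has_complex_gradient_const: "has_complex_gradient (\<lambda>z. c) 0 q"
  unfolding has_complex_gradient_def by simp

lemma has_complex_gradient_nth: "has_complex_gradient (\<lambda>z. z $ i) (axis i 1) q"
  unfolding has_complex_gradient_def
  by (auto simp: axis_def if_distrib[of "\<lambda>x. x * _"] cong: if_cong intro!: derivative_eq_intros)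

lemma has_complex_gradient_add:
  assumes "has_complex_gradient f g q" "has_complex_gradient h g' q"
  shows "has_complex_gradient (\<lambda>z. f z + h z) (g + g') q"
  using assms unfolding has_complex_gradient_def
  by (auto simp: distrib_right sum.distrib intro: DERIV_add)

lemma has_complex_gradient_mult:
  assumes "has_complex_gradient f g q" "has_complex_gradient h g' q"
  shows "has_complex_gradient (\<lambda>z. f z * h z) (h q *s g + f q *s g') q"
  unfolding has_complex_gradient_def
proof
  fix d
  show "((\<lambda>t. f (q + t *s d) * h (q + t *s d)) has_field_derivative
      (\<Sum>k\<in>UNIV. (h q *s g + f q *s g') $ k * d $ k)) (at 0)"
    using DERIV_mult[OF assms[unfolded has_complex_gradient_def, rule_format, of d]]
    by (simp add: algebra_simps sum.distrib sum_distrib_left)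
qed

lemma has_complex_gradient_sum:
  assumes "finite A" "\<And>a. a \<in> A \<Longrightarrow> \<exists>g. has_complex_gradient (f a) g q"
  shows "\<exists>g. has_complex_gradient (\<lambda>z. \<Sum>a\<in>A. f a z) g q"
  using assms
proof (induction A rule: finite_induct)
  case empty
  show ?case using has_complex_gradient_const by auto
next
  case (insert a A)
  then obtain g g' where "has_complex_gradient (f a) g q"
    and "has_complex_gradient (\<lambda>z. \<Sum>a\<in>A. f a z) g' q"
    by blast
  then show ?case
    using has_complex_gradient_add insert.hyps by fastforce
qed

lemma has_complex_gradient_prod:
  assumes "finite A" "\<And>a. a \<in> A \<Longrightarrow> \<exists>g. has_complex_gradient (f a) g q"
  shows "\<exists>g. has_complex_gradient (\<lambda>z. \<Prod>a\<in>A. f a z) g q"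
  using assms
proof (induction A rule: finite_induct)
  case empty
  show ?case using has_complex_gradient_const by auto
next
  case (insert a A)
  then obtain g g' where "has_complex_gradient (f a) g q"
    and "has_complex_gradient (\<lambda>z. \<Prod>a\<in>A. f a z) g' q"
    by blast
  then show ?case
    using has_complex_gradient_mult insert.hyps by fastforce
qed

lemma has_complex_gradient_power:
  assumes "has_complex_gradient f g q"
  shows "\<exists>g. has_complex_gradient (\<lambda>z. f z ^ n) g q"
proof (induction n)
  case 0
  show ?case using has_complex_gradient_const by auto
next
  case (Suc n)
  then obtain g' where "has_complex_gradient (\<lambda>z. f z ^ n) g' q"
    by blast
  then show ?case
    using has_complex_gradient_mult[OF assms] by fastforce
qed

lemma real_poly_system_has_complex_gradient:
  assumes "real_poly_system F"
  obtains g where "has_complex_gradient (\<lambda>z. F z $ i) g q"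
proof -
  obtain A c where "finite A"
    and F: "\<And>z. F z $ i = (\<Sum>\<alpha>\<in>A. of_real (c \<alpha>) * (\<Prod>k\<in>UNIV. (z $ k) ^ (\<alpha> k)))"
    using assms unfolding real_poly_system_def by blast
  have "\<exists>g. has_complex_gradient (\<lambda>z. \<Prod>k\<in>UNIV. (z $ k) ^ (\<alpha> k)) g q" for \<alpha>
    by (rule has_complex_gradient_prod[OF finite]) (rule has_complex_gradient_power[OF has_complex_gradient_nth])
  then have "\<exists>g. has_complex_gradient (\<lambda>z. of_real (c \<alpha>) * (\<Prod>k\<in>UNIV. (z $ k) ^ (\<alpha> k))) g q" for \<alpha>
    using has_complex_gradient_mult[OF has_complex_gradient_const] by blast
  then have "\<exists>g. has_complex_gradient (\<lambda>z. F z $ i) g q"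
    unfolding F by (rule has_complex_gradient_sum[OF \<open>finite A\<close>])
  then show ?thesis using that by blast
qed

lemma has_complex_gradient_partial:
  assumes "has_complex_gradient f g q"
  shows "((\<lambda>t. f (\<chi> k. if k = j then t else q $ k)) has_field_derivative g $ j) (at (q $ j))"
proof -
  have "((\<lambda>u. f (q + u *s axis j 1)) has_field_derivative g $ j) (at (q $ j + - q $ j))"
    using assms[unfolded has_complex_gradient_def, rule_format, of "axis j 1"]
    by (simp add: axis_def if_distrib[of "\<lambda>x. _ * x"] cong: if_cong)
  then have "((\<lambda>t. f (q + (t - q $ j) *s axis j 1)) has_field_derivative g $ j) (at (q $ j))"
    unfolding DERIV_shift by simp
  moreover have "q + (t - q $ j) *s axis j 1 = (\<chi> k. if k = j then t else q $ k)" for t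
    by (simp add: vec_eq_iff axis_def)
  ultimately show ?thesis by simp
qed

lemma real_poly_system_line_derivative:
  assumes "real_poly_system F"
  shows "((\<lambda>t. F (p + t *s d) $ i) has_field_derivative (jac F (p + s *s d) *v d) $ i) (at s)"
proof -
  define q where "q = p + s *s d"
  obtain g where g: "has_complex_gradient (\<lambda>z. F z $ i) g q"
    using real_poly_system_has_complex_gradient[OF assms] .
  have "jac F q $ i $ k = g $ k" for k
    unfolding jac_def using DERIV_imp_deriv[OF has_complex_gradient_partial[OF g]] by simp
  then have "((\<lambda>u. F (q + u *s d) $ i) has_field_derivative (jac F q *v d) $ i) (at (s + - s))"
    using g unfolding has_complex_gradient_def by (simp add: matrix_vector_mult_def)
  then have "((\<lambda>t. F (q + (t - s) *s d) $ i) has_field_derivative (jac F q *v d) $ i) (at s)"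
    unfolding DERIV_shift by simp
  moreover have "q + (t - s) *s d = p + t *s d" for t
    unfolding q_def by (simp add: vec_eq_iff algebra_simps)
  ultimately show ?thesis unfolding q_def by simp
qed

lemma real_poly_system_mean_value:
  fixes L :: "complex \<Rightarrow> real"
  assumes F: "real_poly_system F" and L: "bounded_linear L"
    and "convex S" "p \<in> S" "z \<in> S"
  shows "\<exists>\<xi>\<in>S. L ((F z - F p) $ l) = L ((jac F \<xi> *v (z - p)) $ l)"
proof -
  define \<gamma> where "\<gamma> t = p + of_real t *s (z - p)" for t :: real
  have "((\<lambda>t. L (F (\<gamma> t) $ l)) has_real_derivative L ((jac F (\<gamma> t) *v (z - p)) $ l)) (at t)" for t
    unfolding has_real_derivative_iff_has_vector_derivative \<gamma>_def
    by (intro bounded_linear.has_vector_derivative[OF L] has_vector_derivative_real_field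
        real_poly_system_line_derivative[OF F])
  from MVT2[of 0 1, OF _ this] obtain \<tau> where \<tau>: "0 < \<tau>" "\<tau> < 1"
    and eq: "L (F (\<gamma> 1) $ l) - L (F (\<gamma> 0) $ l) = L ((jac F (\<gamma> \<tau>) *v (z - p)) $ l)"
    by auto
  have "\<gamma> \<tau> = (1 - \<tau>) *\<^sub>R p + \<tau> *\<^sub>R z"
    by (simp add: \<gamma>_def vec_eq_iff algebra_simps) (simp add: scaleR_conv_of_real algebra_simps)
  then have "\<gamma> \<tau> \<in> S"
    using \<tau> assms(3-5) by (simp add: convexD)
  moreover have "\<gamma> 0 = p" "\<gamma> 1 = z"
    by (simp_all add: \<gamma>_def vec_eq_iff)
  ultimately show ?thesis
    using eq by (auto simp: linear_diff[OF bounded_linear.linear[OF L]])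
qed

lemma jac_in_enclosure:
  "is_enclosure_JF F JI \<Longrightarrow> icvec_ok I \<Longrightarrow> w \<in> ibox I \<Longrightarrow> jac F w \<in> imat_members (JI I)"
  unfolding is_enclosure_JF_def by blast

lemma real_poly_system_mean_value_enclosure:
  assumes F: "real_poly_system F" and JI: "is_enclosure_JF F JI" and I: "icvec_ok I"
    and "p \<in> ibox I" "z \<in> ibox I"
  obtains B\<^sub>1 B\<^sub>2 where "B\<^sub>1 \<in> imat_members (JI I)" "B\<^sub>2 \<in> imat_members (JI I)"
    "F z - F p = mixed_mult B\<^sub>1 B\<^sub>2 (z - p)"
proof -
  note mvt = real_poly_system_mean_value[OF F _ convex_ibox[OF I] assms(4,5)]
  obtain \<xi> where \<xi>: "\<And>l. \<xi> l \<in> ibox I"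
    "\<And>l. Re ((F z - F p) $ l) = Re ((jac F (\<xi> l) *v (z - p)) $ l)"
    using mvt[OF bounded_linear_Re] by metis
  obtain \<eta> where \<eta>: "\<And>l. \<eta> l \<in> ibox I"
    "\<And>l. Im ((F z - F p) $ l) = Im ((jac F (\<eta> l) *v (z - p)) $ l)"
    using mvt[OF bounded_linear_Im] by metis
  define B\<^sub>1 where "B\<^sub>1 = (\<chi> l k. Complex (Re (jac F (\<xi> l) $ l $ k)) (Im (jac F (\<eta> l) $ l $ k)))"
  define B\<^sub>2 where "B\<^sub>2 = (\<chi> l k. Complex (Re (jac F (\<eta> l) $ l $ k)) (Im (jac F (\<xi> l) $ l $ k)))"
  show ?thesis
  proof
    show "B\<^sub>1 \<in> imat_members (JI I)" "B\<^sub>2 \<in> imat_members (JI I)"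
      using jac_in_enclosure[OF JI I \<xi>(1)] jac_in_enclosure[OF JI I \<eta>(1)]
      unfolding B\<^sub>1_def B\<^sub>2_def mem_imat_members_iff by simp_all
    show "F z - F p = mixed_mult B\<^sub>1 B\<^sub>2 (z - p)"
      using \<xi>(2) \<eta>(2)
      by (simp add: vec_eq_iff complex_eq_iff B\<^sub>1_def B\<^sub>2_def Re_mixed_mult Im_mixed_mult
          flip: mixed_mult_same)
  qed
qed

lemma newton_map_in_krawczyk:
  assumes F: "real_poly_system F" and FI: "is_enclosure_F F FI" and JI: "is_enclosure_JF F JI"
    and I: "icvec_ok I" and x: "x \<in> ibox I" and z: "z \<in> ibox I"
  shows "z - Y *v F z \<in> ibox (krawczyk FI JI x Y I)"
proof -
  obtain B\<^sub>1 B\<^sub>2 where B: "B\<^sub>1 \<in> imat_members (JI I)" "B\<^sub>2 \<in> imat_members (JI I)"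
    and eq: "F z - F x = mixed_mult B\<^sub>1 B\<^sub>2 (z - x)"
    using real_poly_system_mean_value_enclosure[OF F JI I x z] .
  have "z - Y *v F z = (x - Y *v F x) + mixed_mult (mat 1 - Y ** B\<^sub>1) (mat 1 - Y ** B\<^sub>2) (z - x)"
    by (simp add: mixed_mult_id_minus flip: eq) (simp add: matrix_vector_mult_diff_distrib)
  moreover have "F x \<in> ibox (FI (pt_vec x))"
    using FI icvec_ok_pt_vec ibox_pt_vec unfolding is_enclosure_F_def by blast
  ultimately show ?thesis
    unfolding krawczyk_def
    by (auto intro!: ibox_vec_addI ibox_vec_subI ibox_pt_vec ibox_mat_vecI imat_members_pt_mat
        ibox_mixed_mult_mat_vecI imat_members_kmatI B z)
qed

subsection \<open>Boundedness and the norm of interval matrices\<close>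

lemma bounded_ir_add: "bounded X \<Longrightarrow> bounded Y \<Longrightarrow> bounded (ir_add X Y)"
  using bounded_sums[of X Y] unfolding ir_add_def by (rule bounded_subset) auto

lemma bounded_ir_sub: "bounded X \<Longrightarrow> bounded Y \<Longrightarrow> bounded (ir_sub X Y)"
  using bounded_differences[of X Y] unfolding ir_sub_def by (rule bounded_subset) auto

lemma bounded_ir_mul:
  assumes "bounded X" "bounded Y"
  shows "bounded (ir_mul X Y)"
proof -
  obtain M N where "\<forall>x\<in>X. \<bar>x\<bar> \<le> M" "\<forall>y\<in>Y. \<bar>y\<bar> \<le> N"
    using assms unfolding bounded_iff real_norm_def by blast
  then have "\<forall>r\<in>ir_mul X Y. \<bar>r\<bar> \<le> M * N"
    unfolding ir_mul_def by (force simp: abs_mult intro: mult_mono')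
  then show ?thesis
    unfolding bounded_iff real_norm_def by blast
qed

lemma bounded_ir_sum:
  assumes "finite J" "\<And>j. j \<in> J \<Longrightarrow> bounded (X j)"
  shows "bounded (ir_sum X J)"
proof -
  obtain M where M: "\<And>j x. j \<in> J \<Longrightarrow> x \<in> X j \<Longrightarrow> \<bar>x\<bar> \<le> M j"
    using assms(2) unfolding bounded_iff real_norm_def by metis
  have "\<bar>r\<bar> \<le> (\<Sum>j\<in>J. M j)" if r: "r \<in> ir_sum X J" for r
  proof -
    obtain x where "r = (\<Sum>j\<in>J. x j)" "\<forall>j\<in>J. x j \<in> X j"
      using r unfolding ir_sum_def by blast
    then show ?thesis
      using M by (auto intro!: order_trans[OF sum_abs] sum_mono)
  qed
  then show ?thesis
    unfolding bounded_iff real_norm_def by blast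
qed

definition ic_bounded :: "ic \<Rightarrow> bool" where
  "ic_bounded A \<longleftrightarrow> bounded (fst A) \<and> bounded (snd A)"

lemma ic_bounded_ic_add: "ic_bounded A \<Longrightarrow> ic_bounded B \<Longrightarrow> ic_bounded (ic_add A B)"
  unfolding ic_bounded_def ic_add_def by (simp add: bounded_ir_add)

lemma ic_bounded_ic_sub: "ic_bounded A \<Longrightarrow> ic_bounded B \<Longrightarrow> ic_bounded (ic_sub A B)"
  unfolding ic_bounded_def ic_sub_def by (simp add: bounded_ir_sub)

lemma ic_bounded_ic_mul: "ic_bounded A \<Longrightarrow> ic_bounded B \<Longrightarrow> ic_bounded (ic_mul A B)"
  unfolding ic_bounded_def ic_mul_def by (simp add: bounded_ir_sub bounded_ir_add bounded_ir_mul)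

lemma ic_bounded_ic_sum: "finite J \<Longrightarrow> (\<And>j. j \<in> J \<Longrightarrow> ic_bounded (X j)) \<Longrightarrow> ic_bounded (ic_sum X J)"
  unfolding ic_bounded_def ic_sum_def by (simp add: bounded_ir_sum)

lemma ic_bounded_ic_pt: "ic_bounded (ic_pt z)"
  unfolding ic_bounded_def ic_pt_def by simp

lemma ic_bounded_if_is_ic: "is_ic A \<Longrightarrow> ic_bounded A"
  unfolding ic_bounded_def is_ic_def is_ir_def by auto

lemma bounded_ic_set: "ic_bounded A \<Longrightarrow> bounded (ic_set A)"
proof -
  assume "ic_bounded A"
  then obtain M N where M: "\<forall>x\<in>fst A. \<bar>x\<bar> \<le> M" and N: "\<forall>y\<in>snd A. \<bar>y\<bar> \<le> N"
    unfolding ic_bounded_def bounded_iff real_norm_def by blast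
  have "cmod z \<le> M + N" if "z \<in> ic_set A" for z
    using that M N cmod_le[of z] unfolding mem_ic_set_iff by fastforce
  then have "\<forall>z\<in>ic_set A. cmod z \<le> M + N"
    by blast
  then show "bounded (ic_set A)"
    unfolding bounded_iff by blast
qed

lemma bounded_kmat_entry:
  assumes "icmat_ok (JI I)"
  shows "bounded (ic_set (kmat JI Y I i k))"
proof -
  have "ic_bounded (JI I j k)" for j
    using assms unfolding icmat_ok_def by (simp add: ic_bounded_if_is_ic)
  then show ?thesis
    unfolding kmat_def mat_sub_def mat_mat_def mat_vec_def pt_mat_def
    by (intro bounded_ic_set ic_bounded_ic_sub ic_bounded_ic_pt ic_bounded_ic_sum ic_bounded_ic_mul) auto
qed

lemma vnorm_inf_ge: "cmod (v $ k) \<le> vnorm_inf v"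
  unfolding vnorm_inf_def by (rule Max_ge) auto

lemma vnorm_inf_le: "(\<And>k. cmod (v $ k) \<le> c) \<Longrightarrow> vnorm_inf v \<le> c"
  unfolding vnorm_inf_def by (subst Max_le_iff) auto

lemma vnorm_inf_pos: "v \<noteq> 0 \<Longrightarrow> 0 < vnorm_inf v"
  by (metis less_le_trans vec_eq_iff vnorm_inf_ge zero_index zero_less_norm_iff)

lemma bdd_above_imat_norm:
  assumes "\<And>i k. bounded (ic_set (A i k))"
  shows "bdd_above {vnorm_inf (B *v v) / vnorm_inf v | B v. B \<in> imat_members A \<and> v \<noteq> 0}"
proof -
  have "bounded (\<Union>i. \<Union>k. ic_set (A i k))"
    by (intro bounded_UN ballI finite assms)
  then obtain M where "\<forall>b\<in>(\<Union>i. \<Union>k. ic_set (A i k)). cmod b \<le> M"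
    unfolding bounded_iff by blast
  then have M: "\<And>i k b. b \<in> ic_set (A i k) \<Longrightarrow> cmod b \<le> M"
    by blast
  have "vnorm_inf (B *v v) / vnorm_inf v \<le> CARD('a) * M"
    if B: "B \<in> imat_members A" and "v \<noteq> 0" for B :: "complex^'a^'a" and v
  proof -
    have B_le: "cmod (B $ i $ k) \<le> M" for i k
      using B M unfolding imat_members_def by blast
    have "cmod ((B *v v) $ i) \<le> CARD('a) * M * vnorm_inf v" for i
    proof -
      have "cmod ((B *v v) $ i) \<le> (\<Sum>k\<in>UNIV. cmod (B $ i $ k) * cmod (v $ k))"
        using norm_sum[of "\<lambda>k. B $ i $ k * v $ k" UNIV] by (simp add: matrix_vector_mult_def norm_mult)
      also have "\<dots> \<le> (\<Sum>k\<in>(UNIV :: 'a set). M * vnorm_inf v)"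
        by (intro sum_mono mult_mono) (auto intro: B_le order_trans[OF norm_ge_zero B_le] vnorm_inf_ge)
      finally show ?thesis by simp
    qed
    then have "vnorm_inf (B *v v) \<le> CARD('a) * M * vnorm_inf v"
      by (rule vnorm_inf_le)
    then show ?thesis
      using vnorm_inf_pos[OF \<open>v \<noteq> 0\<close>] by (simp add: pos_divide_le_eq)
  qed
  then show ?thesis
    unfolding bdd_above_def by blast
qed

text \<open>The test vector with entries of modulus one that align the phases of \<open>b\<close> attains the
  row sum; the other rows of the member matrix are taken from \<open>B\<^sub>0\<close>.\<close>
lemma row_sum_le_imat_norm:
  assumes bounded: "\<And>i k. bounded (ic_set (A i k))" and B\<^sub>0: "B\<^sub>0 \<in> imat_members A"
    and b: "\<And>k. b k \<in> ic_set (A i k)"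
  shows "(\<Sum>k\<in>UNIV. cmod (b k)) \<le> imat_norm A"
proof -
  define B where "B = (\<chi> i' k. if i' = i then b k else B\<^sub>0 $ i' $ k)"
  define v where "v = (\<chi> k. if b k = 0 then 1 else cnj (b k) / of_real (cmod (b k)))"
  have B: "B \<in> imat_members A"
    using b B\<^sub>0 unfolding imat_members_def B_def by auto
  have v: "cmod (v $ k) = 1" for k
    unfolding v_def by (auto simp: norm_divide)
  then have "v \<noteq> 0"
    by (metis norm_zero zero_index zero_neq_one)
  have "range (\<lambda>k. cmod (v $ k)) = {1}"
    using v by auto
  then have "vnorm_inf v = 1"
    unfolding vnorm_inf_def by simp
  have "b k * v $ k = of_real (cmod (b k))" for k
    unfolding v_def by (simp flip: complex_norm_square add: power2_eq_square)
  then have "(B *v v) $ i = of_real (\<Sum>k\<in>UNIV. cmod (b k))"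
    unfolding matrix_vector_mult_def B_def by simp
  then have "(\<Sum>k\<in>UNIV. cmod (b k)) \<le> vnorm_inf (B *v v) / vnorm_inf v"
    using vnorm_inf_ge[of "B *v v" i] \<open>vnorm_inf v = 1\<close> by (simp add: sum_nonneg flip: of_real_sum)
  also have "\<dots> \<le> imat_norm A"
    unfolding imat_norm_def using B \<open>v \<noteq> 0\<close>
    by (intro cSup_upper bdd_above_imat_norm bounded) blast
  finally show ?thesis .
qed

lemma abs_sum_Re_Im_le_imat_norm:
  assumes bounded: "\<And>i k. bounded (ic_set (A i k))" and B\<^sub>0: "B\<^sub>0 \<in> imat_members A"
    and c: "\<And>k. c k \<in> ic_set (A i k)" and x: "\<And>k. \<bar>x k\<bar> \<le> m" and y: "\<And>k. \<bar>y k\<bar> \<le> m"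
  shows "\<bar>\<Sum>k\<in>UNIV. Re (c k) * x k + Im (c k) * y k\<bar> \<le> sqrt 2 * imat_norm A * m"
proof -
  have "0 \<le> m"
    using x by (meson abs_ge_zero order_trans)
  have "\<bar>\<Sum>k\<in>UNIV. Re (c k) * x k + Im (c k) * y k\<bar> \<le> (\<Sum>k\<in>UNIV. \<bar>Re (c k)\<bar> * m + \<bar>Im (c k)\<bar> * m)"
    by (intro order_trans[OF sum_abs] sum_mono order_trans[OF abs_triangle_ineq] add_mono)
      (simp_all add: abs_mult mult_left_mono x y)
  also have "\<dots> \<le> (\<Sum>k\<in>UNIV. sqrt 2 * cmod (c k) * m)"
    using mult_right_mono[OF complex_abs_le_norm \<open>0 \<le> m\<close>] by (intro sum_mono) (simp add: distrib_right)
  also have "\<dots> = sqrt 2 * (\<Sum>k\<in>UNIV. cmod (c k)) * m"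
    by (simp add: sum_distrib_left sum_distrib_right)
  also have "\<dots> \<le> sqrt 2 * imat_norm A * m"
    by (intro mult_right_mono mult_left_mono row_sum_le_imat_norm[OF bounded B\<^sub>0 c] \<open>0 \<le> m\<close>) simp
  finally show ?thesis .
qed

subsection \<open>Uniqueness and existence of the zero\<close>

text \<open>With \<open>m\<close> the largest modulus of the real and imaginary parts of the entries of \<open>d\<close>,
  each real and imaginary part of \<open>mixed_mult C\<^sub>1 C\<^sub>2 d\<close> is a row combination as in
  \<open>abs_sum_Re_Im_le_imat_norm\<close> for a rectangular mixture of entries of \<open>C\<^sub>1\<close> and \<open>C\<^sub>2\<close>,
  so \<open>m \<le> sqrt 2 * imat_norm A * m\<close>.\<close>
lemma mixed_mult_fixed_point_eq_0:
  assumes bounded: "\<And>i k. bounded (ic_set (A i k))"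
    and C: "C\<^sub>1 \<in> imat_members A" "C\<^sub>2 \<in> imat_members A"
    and contr: "sqrt 2 * imat_norm A < 1"
    and fixed: "mixed_mult C\<^sub>1 C\<^sub>2 d = d"
  shows "d = 0"
proof -
  define m where "m = Max (range (\<lambda>k. max \<bar>Re (d $ k)\<bar> \<bar>Im (d $ k)\<bar>))"
  have "max \<bar>Re (d $ k)\<bar> \<bar>Im (d $ k)\<bar> \<le> m" for k
    unfolding m_def by (rule Max_ge) auto
  then have m: "\<bar>Re (d $ k)\<bar> \<le> m" "\<bar>Im (d $ k)\<bar> \<le> m" for k
    by (simp_all add: max.bounded_iff)
  have mix: "Complex (Re (C\<^sub>1 $ i $ k)) (Im (C\<^sub>2 $ i $ k)) \<in> ic_set (A i k)"
    "Complex (Re (C\<^sub>2 $ i $ k)) (Im (C\<^sub>1 $ i $ k)) \<in> ic_set (A i k)" for i k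
    using C unfolding imat_members_def by (auto intro: ic_set_Complex_mix)
  have bound: "\<bar>Re (d $ i)\<bar> \<le> sqrt 2 * imat_norm A * m" "\<bar>Im (d $ i)\<bar> \<le> sqrt 2 * imat_norm A * m" for i
  proof -
    have "Re (d $ i) = (\<Sum>k\<in>UNIV. Re (Complex (Re (C\<^sub>1 $ i $ k)) (Im (C\<^sub>2 $ i $ k))) * Re (d $ k)
                        + Im (Complex (Re (C\<^sub>1 $ i $ k)) (Im (C\<^sub>2 $ i $ k))) * - Im (d $ k))"
      by (subst fixed[symmetric]) (simp add: Re_mixed_mult)
    then show "\<bar>Re (d $ i)\<bar> \<le> sqrt 2 * imat_norm A * m"
      using abs_sum_Re_Im_le_imat_norm[OF bounded C(1) mix(1) m(1), of "\<lambda>k. - Im (d $ k)"] m(2)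
      by simp
    have "Im (d $ i) = (\<Sum>k\<in>UNIV. Re (Complex (Re (C\<^sub>2 $ i $ k)) (Im (C\<^sub>1 $ i $ k))) * Im (d $ k)
                        + Im (Complex (Re (C\<^sub>2 $ i $ k)) (Im (C\<^sub>1 $ i $ k))) * Re (d $ k))"
      by (subst fixed[symmetric]) (simp add: Im_mixed_mult add.commute)
    then show "\<bar>Im (d $ i)\<bar> \<le> sqrt 2 * imat_norm A * m"
      using abs_sum_Re_Im_le_imat_norm[OF bounded C(1) mix(2) m(2) m(1)] by simp
  qed
  have "m \<in> range (\<lambda>k. max \<bar>Re (d $ k)\<bar> \<bar>Im (d $ k)\<bar>)"
    unfolding m_def by (rule Max_in) auto
  then obtain k where k: "max \<bar>Re (d $ k)\<bar> \<bar>Im (d $ k)\<bar> = m"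
    by auto
  have "max \<bar>Re (d $ k)\<bar> \<bar>Im (d $ k)\<bar> \<le> sqrt 2 * imat_norm A * m"
    by (intro max.boundedI bound)
  then have "m \<le> sqrt 2 * imat_norm A * m"
    by (simp only: k)
  then have "(1 - sqrt 2 * imat_norm A) * m \<le> 0"
    by (simp add: algebra_simps)
  then have "m \<le> 0"
    using contr by (auto simp: mult_le_0_iff)
  then have "\<bar>Re (d $ k)\<bar> \<le> 0" "\<bar>Im (d $ k)\<bar> \<le> 0" for k
    using m order_trans by blast+
  then show "d = 0"
    by (simp add: vec_eq_iff complex_eq_iff)
qed

lemma krawczyk_inj_on:
  assumes F: "real_poly_system F" and JI: "is_enclosure_JF F JI" and I: "icvec_ok I"
    and contr: "sqrt 2 * imat_norm (kmat JI Y I) < 1"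
  shows "inj_on F (ibox I)"
proof (rule inj_onI)
  fix z w assume z: "z \<in> ibox I" and w: "w \<in> ibox I" and "F z = F w"
  obtain B\<^sub>1 B\<^sub>2 where B: "B\<^sub>1 \<in> imat_members (JI I)" "B\<^sub>2 \<in> imat_members (JI I)"
    and "F z - F w = mixed_mult B\<^sub>1 B\<^sub>2 (z - w)"
    using real_poly_system_mean_value_enclosure[OF F JI I w z] .
  with \<open>F z = F w\<close> have "mixed_mult (mat 1 - Y ** B\<^sub>1) (mat 1 - Y ** B\<^sub>2) (z - w) = z - w"
    by (simp add: mixed_mult_id_minus)
  moreover have "icmat_ok (JI I)"
    using JI I unfolding is_enclosure_JF_def by blast
  ultimately have "z - w = 0"
    using mixed_mult_fixed_point_eq_0[OF bounded_kmat_entry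
        imat_members_kmatI[where JI = JI and I = I, OF B(1)]
        imat_members_kmatI[where JI = JI and I = I, OF B(2)] contr] by blast
  then show "z = w" by simp
qed

lemma real_poly_system_continuous_on:
  assumes "real_poly_system F"
  shows "continuous_on S F"
proof -
  have "continuous_on S (\<lambda>z. F z $ i)" for i
  proof -
    obtain A c where "\<And>z. F z $ i = (\<Sum>\<alpha>\<in>A. of_real (c \<alpha>) * (\<Prod>k\<in>UNIV. (z $ k) ^ (\<alpha> k)))"
      using assms unfolding real_poly_system_def by blast
    then show ?thesis by (simp add: continuous_intros)
  qed
  then show ?thesis
    using continuous_on_vec_lambda[of S "\<lambda>i z. F z $ i"] by simp
qed

lemma real_poly_system_vcnj:
  assumes "real_poly_system F"
  shows "F (vcnj z) = vcnj (F z)"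
proof -
  have "F (vcnj z) $ i = cnj (F z $ i)" for i
  proof -
    obtain A c where "\<And>z. F z $ i = (\<Sum>\<alpha>\<in>A. of_real (c \<alpha>) * (\<Prod>k\<in>UNIV. (z $ k) ^ (\<alpha> k)))"
      using assms unfolding real_poly_system_def by blast
    then show ?thesis by (simp add: vcnj_def)
  qed
  then show ?thesis
    by (simp add: vec_eq_iff vcnj_def)
qed

lemma krawczyk_zero_exists:
  assumes F: "real_poly_system F" and FI: "is_enclosure_F F FI" and JI: "is_enclosure_JF F JI"
    and I: "icvec_ok I" and x: "x \<in> ibox I" and "invertible Y"
    and K: "ibox (krawczyk FI JI x Y I) \<subseteq> ibox I"
  obtains z where "z \<in> ibox (krawczyk FI JI x Y I)" "F z = 0"
proof -
  have "continuous_on (ibox I) (\<lambda>z. Y *v F z)"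
    by (rule linear_continuous_on_compose[OF real_poly_system_continuous_on[OF F] matrix_vector_mul_linear])
  then have "continuous_on (ibox I) (\<lambda>z. z - Y *v F z)"
    by (intro continuous_on_diff continuous_on_id)
  moreover have maps_to: "z - Y *v F z \<in> ibox (krawczyk FI JI x Y I)" if "z \<in> ibox I" for z
    using newton_map_in_krawczyk[OF F FI JI I x that] .
  ultimately obtain z where z: "z \<in> ibox I" and fixed: "z - Y *v F z = z"
    using brouwer[OF compact_ibox[OF I] convex_ibox[OF I], of "\<lambda>z. z - Y *v F z"] x K by blast
  have "Y *v F z = Y *v 0"
    using fixed by simp
  then have "F z = 0"
    by (rule injD[OF inj_matrix_vector_mult[OF \<open>invertible Y\<close>]])
  moreover have "z \<in> ibox (krawczyk FI JI x Y I)"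
    using maps_to[OF z] unfolding fixed .
  ultimately show ?thesis
    using that by blast
qed

lemma vcnj_0 [simp]: "vcnj 0 = 0"
  by (simp add: vcnj_def vec_eq_iff)

lemma vcnj_eq_self_iff: "vcnj z = z \<longleftrightarrow> (\<forall>k. Im (z $ k) = 0)"
  by (simp add: vcnj_def vec_eq_iff complex_eq_iff)

theorem corollary4p12:
  fixes F :: "complex^'n::finite \<Rightarrow> complex^'n"
    and FI :: "('n \<Rightarrow> ic) \<Rightarrow> ('n \<Rightarrow> ic)"
    and JI :: "('n \<Rightarrow> ic) \<Rightarrow> ('n \<Rightarrow> 'n \<Rightarrow> ic)"
    and I :: "'n \<Rightarrow> ic"
  assumes "real_poly_system F"
    and "is_enclosure_F F FI"
    and "is_enclosure_JF F JI"
    and "icvec_ok I"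
    and "strong_iaz FI JI I"
    and "\<exists>x Y. x \<in> ibox I \<and> invertible Y \<and> ibox (krawczyk FI JI x Y I) \<subseteq> ibox I \<and>
            sqrt 2 * imat_norm (kmat JI Y I) < 1 \<and>
            vcnj ` ibox (krawczyk FI JI x Y I) \<subseteq> ibox I"
    and "\<forall>k. \<forall>r\<in>fst (I k). r > 0"
  shows "\<exists>z\<in>ibox I. F z = 0 \<and> (\<forall>w\<in>ibox I. F w = 0 \<longrightarrow> w = z) \<and>
           (\<forall>k. Im (z $ k) = 0 \<and> Re (z $ k) > 0)"
proof -
  \<comment> \<open>\<open>strong_iaz FI JI I\<close> is implied by the sixth hypothesis and not needed.\<close>
  note F = assms(1) and FI = assms(2) and JI = assms(3) and I = assms(4)
  obtain x Y where x: "x \<in> ibox I" and "invertible Y"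
    and K: "ibox (krawczyk FI JI x Y I) \<subseteq> ibox I"
    and contr: "sqrt 2 * imat_norm (kmat JI Y I) < 1"
    and cnj_K: "vcnj ` ibox (krawczyk FI JI x Y I) \<subseteq> ibox I"
    using assms(6) by blast
  obtain z where zK: "z \<in> ibox (krawczyk FI JI x Y I)" and zero: "F z = 0"
    using krawczyk_zero_exists[OF F FI JI I x \<open>invertible Y\<close> K] .
  have z: "z \<in> ibox I"
    using zK K by blast
  have inj: "inj_on F (ibox I)"
    using krawczyk_inj_on[OF F JI I contr] .
  have "vcnj z \<in> ibox I"
    using zK cnj_K by blast
  moreover have "F (vcnj z) = F z"
    by (simp add: real_poly_system_vcnj[OF F] zero)
  ultimately have "vcnj z = z"
    using inj z by (blast dest: inj_onD)
  then have "\<forall>k. Im (z $ k) = 0"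
    by (simp add: vcnj_eq_self_iff)
  moreover have "Re (z $ k) > 0" for k
    using z assms(7) unfolding mem_ibox_iff by blast
  moreover have "\<forall>w\<in>ibox I. F w = 0 \<longrightarrow> w = z"
    using inj z zero by (metis inj_onD)
  ultimately show ?thesis
    using z zero by blast
qed

end
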